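(* Let $G$ be a graph and $k\in\mathbb{N}$. If $\mathcal{D}$ is a $k$-tight tree-partition of $G$ that has a $k$-splittable torso, then there is a $k$-tight tree-partition $\mathcal{D}'$ of $G$ with $\mathbf{w}(\mathcal{D}')<\mathbf{w}(\mathcal{D})$.
   Context: All graphs are finite, undirected, loopless, may have parallel edges; degrees count edges with multiplicity and $\Delta(H)$ is the maximum degree of $H$. A tree-partition of $G$ is a pair $(T,\mathcal{B})$ with $T$ a tree and $\mathcal{B}=\{B_t: t\in V(T)\}$ a family of pairwise disjoint, possibly empty, subsets of $V(G)$ whose union is $V(G)$. For $e\in E(T)$, with $T_1,T_2$ the components of $T-e$ and $V_i=\bigcup_{t\in V(T_i)}B_t$, $\mathbf{cross}(e)$ is the set of edges of $G$ between $V_1$ and $V_2$; the adhesion is $\max_{e\in E(T)}|\mathbf{cross}(e)|$. For $t\in V(T)$, with $T_1,\dots,T_q$ the components of $T-t$, the torso $Z_t$ is obtained from $G$ by identifying, for each $i$, all vertices of $\bigcup_{h\in V(T_i)}B_h$ into a single new vertex (a satellite), keeping parallel edges and deleting loops. The strength of the tree-partition is $\min_{t\in V(T)}\Delta(Z_t)$. A tree-partition is $k$-tight if its adhesion is at most $k$ and its strength is at least $k+1$. A torso $Z_t$ is $k$-splittable if it has a cut $(X,V(Z_t)\setminus X)$ with at most $k$ crossing edges such that both $X$ and $V(Z_t)\setminus X$ contain a vertex of degree at least $k+1$ in $Z_t$. For a tree-partition $\mathcal{D}$, $\mathbf{s}_{\mathcal{D}}(t)$ is the number of vertices of $B_t$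 of degree at least $k+1$ in $G$, and $\mathbf{w}(\mathcal{D})=\sum_{t\in V(T)}(\mathbf{s}_{\mathcal{D}}(t)-1)$. *)

theory Defs
  imports Main "HOL-Library.Multiset"
begin

text \<open>A multigraph is a finite vertex set V together with a multiset E of edges;
each edge is a 2-element subset of V (loopless, parallel edges allowed via multiplicity).\<close>

definition mgraph :: "'v set \<Rightarrow> 'v set multiset \<Rightarrow> bool" where
  "mgraph V E \<longleftrightarrow> finite V \<and> (\<forall>e\<in>#E. card e = 2 \<and> e \<subseteq> V)"

definition deg :: "'v set multiset \<Rightarrow> 'v \<Rightarrow> nat" where
  "deg E v = size (filter_mset (\<lambda>e. v \<in> e) E)"

definition max_deg :: "'v set \<Rightarrow> 'v set multiset \<Rightarrow> nat" where
  "max_deg V E = Max (insert 0 (deg E ` V))"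

definition cut_edges :: "'v set multiset \<Rightarrow> 'v set \<Rightarrow> 'v set \<Rightarrow> nat" where
  "cut_edges E X Y = size (filter_mset (\<lambda>e. e \<inter> X \<noteq> {} \<and> e \<inter> Y \<noteq> {}) E)"

definition tcycle :: "'n set set \<Rightarrow> 'n list \<Rightarrow> bool" where
  "tcycle TE cs \<longleftrightarrow> length cs \<ge> 3 \<and> distinct cs
     \<and> (\<forall>i < length cs - 1. {cs ! i, cs ! (i+1)} \<in> TE) \<and> {last cs, hd cs} \<in> TE"

definition stree :: "'n set \<Rightarrow> 'n set set \<Rightarrow> bool" where
  "stree N TE \<longleftrightarrow> finite N \<and> N \<noteq> {} \<and> (\<forall>e\<in>TE. card e = 2 \<and> e \<subseteq> N)
     \<and> (\<forall>a\<in>N. \<forall>b\<in>N. (a, b) \<in> {(x, y). {x, y} \<in> TE}\<^sup>*)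
     \<and> (\<nexists>cs. tcycle TE cs)"

definition comp_del_node :: "'n set \<Rightarrow> 'n set set \<Rightarrow> 'n \<Rightarrow> 'n \<Rightarrow> 'n set" where
  "comp_del_node N TE t h = {x \<in> N - {t}. (h, x) \<in> {(a, b). {a, b} \<in> TE \<and> t \<notin> {a, b}}\<^sup>*}"

definition comps_node :: "'n set \<Rightarrow> 'n set set \<Rightarrow> 'n \<Rightarrow> 'n set set" where
  "comps_node N TE t = comp_del_node N TE t ` (N - {t})"

definition comp_del_edge :: "'n set \<Rightarrow> 'n set set \<Rightarrow> 'n set \<Rightarrow> 'n \<Rightarrow> 'n set" where
  "comp_del_edge N TE e a = {x \<in> N. (a, x) \<in> {(u, w). {u, w} \<in> TE - {e}}\<^sup>*}"

definition bag_union :: "('n \<Rightarrow> 'v set) \<Rightarrow> 'n set \<Rightarrow> 'v set" where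
  "bag_union B S = (\<Union>h\<in>S. B h)"

definition cross_size :: "'v set multiset \<Rightarrow> 'n set \<Rightarrow> 'n set set \<Rightarrow> ('n \<Rightarrow> 'v set) \<Rightarrow> 'n \<Rightarrow> 'n \<Rightarrow> nat" where
  "cross_size E N TE B a b =
     cut_edges E (bag_union B (comp_del_edge N TE {a, b} a)) (bag_union B (comp_del_edge N TE {a, b} b))"

definition tree_partition :: "'v set \<Rightarrow> 'v set multiset \<Rightarrow> 'n set \<Rightarrow> 'n set set \<Rightarrow> ('n \<Rightarrow> 'v set) \<Rightarrow> bool" where
  "tree_partition V E N TE B \<longleftrightarrow> stree N TE
     \<and> (\<forall>s\<in>N. \<forall>t\<in>N. s \<noteq> t \<longrightarrow> B s \<inter> B t = {})
     \<and> (\<Union>t\<in>N. B t) = V"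

text \<open>Vertices of the torso Z_t: the vertices of B_t (Inl) and one satellite per component
of T - t (Inr C, C the node set of the component).\<close>
definition torso_map :: "'n set \<Rightarrow> 'n set set \<Rightarrow> ('n \<Rightarrow> 'v set) \<Rightarrow> 'n \<Rightarrow> 'v \<Rightarrow> 'v + 'n set" where
  "torso_map N TE B t v = (if v \<in> B t then Inl v
     else Inr (THE C. C \<in> comps_node N TE t \<and> (\<exists>h\<in>C. v \<in> B h)))"

definition torso_V :: "'n set \<Rightarrow> 'n set set \<Rightarrow> ('n \<Rightarrow> 'v set) \<Rightarrow> 'n \<Rightarrow> ('v + 'n set) set" where
  "torso_V N TE B t = Inl ` B t \<union> Inr ` comps_node N TE t"

text \<open>Edges: images of edges of G under the identification; loops (edges whose image
is a singleton) are deleted, parallel edges kept.\<close>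
definition torso_E :: "'v set multiset \<Rightarrow> 'n set \<Rightarrow> 'n set set \<Rightarrow> ('n \<Rightarrow> 'v set) \<Rightarrow> 'n \<Rightarrow> ('v + 'n set) set multiset" where
  "torso_E E N TE B t = filter_mset (\<lambda>e. card e = 2) (image_mset (\<lambda>e. torso_map N TE B t ` e) E)"

definition k_tight :: "nat \<Rightarrow> 'v set \<Rightarrow> 'v set multiset \<Rightarrow> 'n set \<Rightarrow> 'n set set \<Rightarrow> ('n \<Rightarrow> 'v set) \<Rightarrow> bool" where
  "k_tight k V E N TE B \<longleftrightarrow> tree_partition V E N TE B
     \<and> (\<forall>a b. {a, b} \<in> TE \<longrightarrow> cross_size E N TE B a b \<le> k)
     \<and> (\<forall>t\<in>N. max_deg (torso_V N TE B t) (torso_E E N TE B t) \<ge> k + 1)"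

definition k_splittable :: "nat \<Rightarrow> 'v set multiset \<Rightarrow> 'n set \<Rightarrow> 'n set set \<Rightarrow> ('n \<Rightarrow> 'v set) \<Rightarrow> 'n \<Rightarrow> bool" where
  "k_splittable k E N TE B t \<longleftrightarrow>
     (let Z = torso_V N TE B t; EZ = torso_E E N TE B t in
      \<exists>X \<subseteq> Z. cut_edges EZ X (Z - X) \<le> k
          \<and> (\<exists>x\<in>X. deg EZ x \<ge> k + 1) \<and> (\<exists>y\<in>Z - X. deg EZ y \<ge> k + 1))"

definition s_count :: "nat \<Rightarrow> 'v set multiset \<Rightarrow> ('n \<Rightarrow> 'v set) \<Rightarrow> 'n \<Rightarrow> nat" where
  "s_count k E B t = card {v \<in> B t. deg E v \<ge> k + 1}"

definition weight :: "nat \<Rightarrow> 'v set multiset \<Rightarrow> 'n set \<Rightarrow> ('n \<Rightarrow> 'v set) \<Rightarrow> int" where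
  "weight k E N B = (\<Sum>t\<in>N. int (s_count k E B t) - 1)"

end

theory Submission
  imports Defs "HOL-Library.Transitive_Closure_Table"
begin

text \<open>Split the node \<open>t\<close> with the splittable torso into two adjacent nodes, one carrying the
  side \<open>X\<close> of the small torso cut (the vertices of \<open>B t\<close> in \<open>X\<close> and the subtrees whose satellites
  lie in \<open>X\<close>), the other carrying the rest. The new tree edge crosses exactly the edges of the
  torso cut, every old tree edge keeps its cross set, and both halves of \<open>B t\<close> keep a vertex of
  degree at least \<open>k + 1\<close>. Since satellites have degree at most the adhesion, strength at least
  \<open>k + 1\<close> just means that every bag contains such a vertex, so the split partition is again
  \<open>k\<close>-tight; it has one node more and the same high-degree vertices, so the weight drops by one.\<close>

section \<open>Components of a tree after deleting an edge or a node\<close>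

definition adj_without_edge :: "'n set set \<Rightarrow> 'n set \<Rightarrow> ('n \<times> 'n) set" where
  "adj_without_edge TE e = {(u, w). {u, w} \<in> TE - {e}}"

definition adj_without_node :: "'n set set \<Rightarrow> 'n \<Rightarrow> ('n \<times> 'n) set" where
  "adj_without_node TE t = {(a, b). {a, b} \<in> TE \<and> t \<notin> {a, b}}"

lemma comp_del_edge_eq: "comp_del_edge N TE e a = {x \<in> N. (a, x) \<in> (adj_without_edge TE e)\<^sup>*}"
  unfolding comp_del_edge_def adj_without_edge_def by simp

lemma comp_del_node_eq: "comp_del_node N TE t h = {x \<in> N - {t}. (h, x) \<in> (adj_without_node TE t)\<^sup>*}"
  unfolding comp_del_node_def adj_without_node_def by simp

lemma sym_rtrancl_doubleton_rel:
  "(x, y) \<in> {(a, b). {a, b} \<in> F \<and> P {a, b}}\<^sup>* \<Longrightarrow> (y, x) \<in> {(a, b). {a, b} \<in> F \<and> P {a, b}}\<^sup>*"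
  using sym_rtrancl[of "{(a, b). {a, b} \<in> F \<and> P {a, b}}"]
  unfolding sym_def by (simp add: insert_commute)

lemma adj_without_edge_rtrancl_sym:
  "(x, y) \<in> (adj_without_edge TE e)\<^sup>* \<Longrightarrow> (y, x) \<in> (adj_without_edge TE e)\<^sup>*"
  using sym_rtrancl_doubleton_rel[of x y TE "\<lambda>f. f \<noteq> e"] by (simp add: adj_without_edge_def)

lemma adj_without_node_rtrancl_sym:
  "(x, y) \<in> (adj_without_node TE t)\<^sup>* \<Longrightarrow> (y, x) \<in> (adj_without_node TE t)\<^sup>*"
  using sym_rtrancl_doubleton_rel[of x y TE "\<lambda>f. t \<notin> f"] by (simp add: adj_without_node_def)

lemma stree_connected:
  "stree N TE \<Longrightarrow> a \<in> N \<Longrightarrow> b \<in> N \<Longrightarrow> (a, b) \<in> {(x, y). {x, y} \<in> TE}\<^sup>*"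
  unfolding stree_def by blast

lemma stree_edgeD: "stree N TE \<Longrightarrow> {a, b} \<in> TE \<Longrightarrow> a \<in> N \<and> b \<in> N \<and> a \<noteq> b"
  unfolding stree_def by (cases "a = b") auto

text \<open>A path around the deleted edge closes a cycle with it.\<close>
lemma stree_edge_is_bridge:
  assumes T: "stree N TE" and e: "{a, b} \<in> TE"
  shows "(a, b) \<notin> (adj_without_edge TE {a, b})\<^sup>*"
proof
  let ?r = "\<lambda>u w. (u, w) \<in> adj_without_edge TE {a, b}"
  assume "(a, b) \<in> (adj_without_edge TE {a, b})\<^sup>*"
  then obtain xs where "rtrancl_path ?r a xs b"
    using rtranclp_eq_rtrancl_path[of ?r] by (auto simp: rtrancl_def)
  then obtain xs where p: "rtrancl_path ?r a xs b" and d: "distinct (a # xs)"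
    by (rule rtrancl_path_distinct)
  have "a \<noteq> b" using stree_edgeD[OF T e] by simp
  then have ne: "xs \<noteq> []" using p by (auto elim: rtrancl_path.cases)
  have "xs \<noteq> [b]"
  proof
    assume "xs = [b]"
    with p have "(a, b) \<in> adj_without_edge TE {a, b}" by (auto elim!: rtrancl_path.cases)
    then show False by (simp add: adj_without_edge_def)
  qed
  with ne rtrancl_path_last[OF p ne] have len: "length xs \<ge> 2"
    by (cases xs; cases "tl xs"; auto)
  have "tcycle TE (a # xs)"
    unfolding tcycle_def
  proof (intro conjI allI impI)
    show "3 \<le> length (a # xs)" using len by simp
    fix i assume "i < length (a # xs) - 1"
    then have "?r ((a # xs) ! i) (xs ! i)" using rtrancl_path_nth[OF p] by simp
    then show "{(a # xs) ! i, (a # xs) ! (i + 1)} \<in> TE" by (simp add: adj_without_edge_def)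
  next
    show "{last (a # xs), hd (a # xs)} \<in> TE"
      using rtrancl_path_last[OF p ne] ne e by (simp add: insert_commute)
  qed (fact d)
  then show False using T unfolding stree_def by blast
qed

text \<open>Conversely, a cycle would contain an edge that is not a bridge: walking along the cycle
  from its first to its last node avoids the closing edge.\<close>
lemma no_tcycle_if_bridges:
  assumes bridges: "\<And>a b. {a, b} \<in> TE \<Longrightarrow> (a, b) \<notin> (adj_without_edge TE {a, b})\<^sup>*"
  shows "\<not> tcycle TE cs"
proof
  assume "tcycle TE cs"
  define n where "n = length cs"
  have n3: "n \<ge> 3" and dist: "distinct cs"
    and step: "\<And>i. i < n - 1 \<Longrightarrow> {cs ! i, cs ! (i + 1)} \<in> TE"
    and closing: "{hd cs, last cs} \<in> TE"
    using \<open>tcycle TE cs\<close> unfolding tcycle_def n_def by (auto simp: insert_commute)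
  have "cs \<noteq> []" using n3 unfolding n_def by auto
  then have ends: "hd cs = cs ! 0" "last cs = cs ! (n - 1)"
    unfolding n_def by (simp_all add: last_conv_nth hd_conv_nth)
  have inj: "p = q" if "p < n" "q < n" "cs ! p = cs ! q" for p q
    using that dist unfolding n_def by (simp add: nth_eq_iff_index_eq)
  let ?R = "adj_without_edge TE {hd cs, last cs}"
  have "(hd cs, cs ! i) \<in> ?R\<^sup>*" if "i \<le> n - 1" for i
    using that
  proof (induction i)
    case 0 then show ?case by (simp add: ends)
  next
    case (Suc i)
    have "{cs ! i, cs ! (i + 1)} \<noteq> {cs ! 0, cs ! (n - 1)}"
    proof
      assume "{cs ! i, cs ! (i + 1)} = {cs ! 0, cs ! (n - 1)}"
      then have "cs ! (i + 1) = cs ! 0 \<or> cs ! (i + 1) = cs ! (n - 1)"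
        "cs ! i = cs ! 0 \<or> cs ! i = cs ! (n - 1)" by (auto simp: doubleton_eq_iff)
      then have "i + 1 = 0 \<or> i + 1 = n - 1" "i = 0 \<or> i = n - 1"
        using inj Suc.prems n3 by (metis Suc_le_lessD add_lessD1 diff_less le_less_trans
            less_numeral_extra(1) less_trans not_gr_zero numeral_nat(3) Suc_eq_plus1)+
      then show False using Suc.prems n3 by auto
    qed
    then have "(cs ! i, cs ! Suc i) \<in> ?R"
      using step[of i] Suc.prems by (simp add: adj_without_edge_def ends)
    with Suc show ?case by (meson Suc_leD rtrancl.rtrancl_into_rtrancl)
  qed
  then have "(hd cs, last cs) \<in> ?R\<^sup>*" by (simp add: ends)
  then show False using bridges closing by blast
qed

lemma comp_del_edge_cover:
  assumes T: "stree N TE" and e: "{a, b} \<in> TE" and x: "x \<in> N"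
  shows "x \<in> comp_del_edge N TE {a, b} a \<union> comp_del_edge N TE {a, b} b"
proof -
  have "(a, x) \<in> {(x, y). {x, y} \<in> TE}\<^sup>*" using stree_connected[OF T _ x] stree_edgeD[OF T e] by blast
  then have "(a, x) \<in> (adj_without_edge TE {a, b})\<^sup>* \<or> (b, x) \<in> (adj_without_edge TE {a, b})\<^sup>*"
  proof (induction rule: rtrancl_induct)
    case (step y z)
    show ?case
    proof (cases "{y, z} = {a, b}")
      case False
      then have "(y, z) \<in> adj_without_edge TE {a, b}" using step.hyps(2) by (simp add: adj_without_edge_def)
      then show ?thesis using step.IH by (meson rtrancl.rtrancl_into_rtrancl)
    qed (auto simp: doubleton_eq_iff)
  qed simp
  then show ?thesis using x by (auto simp: comp_del_edge_eq)
qed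

lemma comp_del_edge_disjoint:
  assumes T: "stree N TE" and e: "{a, b} \<in> TE"
  shows "comp_del_edge N TE {a, b} a \<inter> comp_del_edge N TE {a, b} b = {}"
  using stree_edge_is_bridge[OF T e]
  by (auto simp: comp_del_edge_eq dest: adj_without_edge_rtrancl_sym intro: rtrancl_trans)

lemma comp_del_edge_subset: "comp_del_edge N TE e a \<subseteq> N"
  by (auto simp: comp_del_edge_eq)

lemma comp_del_edge_other:
  assumes "stree N TE" "{a, b} \<in> TE"
  shows "comp_del_edge N TE {a, b} b = N - comp_del_edge N TE {a, b} a"
  using comp_del_edge_cover[OF assms] comp_del_edge_disjoint[OF assms]
    comp_del_edge_subset[of N TE "{a, b}" b] by blast

lemma comp_del_node_self: "x \<in> N - {t} \<Longrightarrow> x \<in> comp_del_node N TE t x"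
  by (simp add: comp_del_node_eq)

lemma comp_del_node_subset: "comp_del_node N TE t x \<subseteq> N - {t}"
  by (auto simp: comp_del_node_eq)

lemma comp_del_node_eq_if_mem:
  assumes "y \<in> comp_del_node N TE t x"
  shows "comp_del_node N TE t y = comp_del_node N TE t x"
proof -
  have "(x, y) \<in> (adj_without_node TE t)\<^sup>*" using assms by (simp add: comp_del_node_eq)
  then show ?thesis unfolding comp_del_node_eq
    by (blast dest: adj_without_node_rtrancl_sym intro: rtrancl_trans)
qed

lemma comp_del_node_edge:
  assumes "{x, y} \<in> TE" "t \<notin> {x, y}" "y \<in> N"
  shows "comp_del_node N TE t y = comp_del_node N TE t x"
proof (rule comp_del_node_eq_if_mem)
  have "(x, y) \<in> adj_without_node TE t" using assms by (simp add: adj_without_node_def)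
  then show "y \<in> comp_del_node N TE t x" using assms by (auto simp: comp_del_node_eq)
qed

lemma comp_del_node_neighbour:
  assumes T: "stree N TE" and t: "t \<in> N" and g: "g \<in> N - {t}"
  obtains h where "{t, h} \<in> TE" "comp_del_node N TE t g = comp_del_node N TE t h"
proof -
  have "(t, g) \<in> {(x, y). {x, y} \<in> TE}\<^sup>*" using stree_connected[OF T t] g by simp
  then have "g = t \<or> (\<exists>h. {t, h} \<in> TE \<and> (h, g) \<in> (adj_without_node TE t)\<^sup>*)"
  proof (induction rule: rtrancl_induct)
    case (step y z)
    then show ?case
    proof (cases "z = t \<or> y = t")
      case False
      then have "(y, z) \<in> adj_without_node TE t" using step.hyps(2) by (auto simp: adj_without_node_def)
      then show ?thesis using step.IH False by (meson rtrancl.rtrancl_into_rtrancl)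
    qed auto
  qed simp
  then obtain h where h: "{t, h} \<in> TE" "(h, g) \<in> (adj_without_node TE t)\<^sup>*" using g by auto
  then have "g \<in> comp_del_node N TE t h" using g by (simp add: comp_del_node_eq)
  then show ?thesis using that h(1) comp_del_node_eq_if_mem by metis
qed

lemma comp_del_node_eq_comp_del_edge:
  assumes T: "stree N TE" and e: "{t, h} \<in> TE"
  shows "comp_del_node N TE t h = comp_del_edge N TE {t, h} h"
proof
  have "adj_without_node TE t \<subseteq> adj_without_edge TE {t, h}"
    by (auto simp: adj_without_node_def adj_without_edge_def)
  then have "(adj_without_node TE t)\<^sup>* \<subseteq> (adj_without_edge TE {t, h})\<^sup>*"
    by (rule rtrancl_mono)
  then show "comp_del_node N TE t h \<subseteq> comp_del_edge N TE {t, h} h"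
    by (auto simp: comp_del_node_eq comp_del_edge_eq)
next
  have not_t: "(h, t) \<notin> (adj_without_edge TE {t, h})\<^sup>*"
    using stree_edge_is_bridge[OF T e] adj_without_edge_rtrancl_sym by metis
  have "h \<noteq> t" using stree_edgeD[OF T e] by auto
  show "comp_del_edge N TE {t, h} h \<subseteq> comp_del_node N TE t h"
  proof
    fix x assume "x \<in> comp_del_edge N TE {t, h} h"
    then have x: "x \<in> N" "(h, x) \<in> (adj_without_edge TE {t, h})\<^sup>*" by (auto simp: comp_del_edge_eq)
    from x(2) have "(h, x) \<in> (adj_without_node TE t)\<^sup>* \<and> x \<noteq> t"
    proof (induction rule: rtrancl_induct)
      case (step y z)
      have "(h, z) \<in> (adj_without_edge TE {t, h})\<^sup>*"
        using step.hyps by (rule rtrancl.rtrancl_into_rtrancl)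
      then have "z \<noteq> t" using not_t by blast
      with step have "(y, z) \<in> adj_without_node TE t"
        by (auto simp: adj_without_node_def adj_without_edge_def)
      then show ?case using step \<open>z \<noteq> t\<close> by (meson rtrancl.rtrancl_into_rtrancl)
    qed (simp add: \<open>h \<noteq> t\<close>)
    then show "x \<in> comp_del_node N TE t h" using x by (simp add: comp_del_node_eq)
  qed
qed

section \<open>Torsos of tree-partitions\<close>

lemma tree_partition_stree: "tree_partition V E N TE B \<Longrightarrow> stree N TE"
  by (simp add: tree_partition_def)

lemma tree_partition_bag_unique:
  "tree_partition V E N TE B \<Longrightarrow> s \<in> N \<Longrightarrow> u \<in> N \<Longrightarrow> x \<in> B s \<Longrightarrow> x \<in> B u \<Longrightarrow> s = u"
  unfolding tree_partition_def by blast

lemma tree_partition_bag_subset: "tree_partition V E N TE B \<Longrightarrow> u \<in> N \<Longrightarrow> B u \<subseteq> V"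
  unfolding tree_partition_def by blast

lemma tree_partition_coverE:
  assumes "tree_partition V E N TE B" "x \<in> V"
  obtains u where "u \<in> N" "x \<in> B u"
  using assms unfolding tree_partition_def by blast

lemma mgraph_edgeE:
  assumes "mgraph V E" "e \<in># E"
  obtains a b where "e = {a, b}" "a \<noteq> b" "a \<in> V" "b \<in> V"
  using assms unfolding mgraph_def by (metis card_2_iff insert_subset)

lemma size_filter_mset_mono:
  assumes "\<And>x. x \<in># M \<Longrightarrow> P x \<Longrightarrow> Q x"
  shows "size (filter_mset P M) \<le> size (filter_mset Q M)"
  by (rule size_mset_mono, rule filter_mset_mono_strong) (use assms in auto)

lemma torso_map_Inl: "v \<in> B t \<Longrightarrow> torso_map N TE B t v = Inl v"
  by (simp add: torso_map_def)

lemma torso_map_eq_Inl_iff: "torso_map N TE B t x = Inl v \<longleftrightarrow> x \<in> B t \<and> x = v"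
  by (simp add: torso_map_def)

lemma torso_map_Inr:
  assumes tp: "tree_partition V E N TE B" and t: "t \<in> N" and u: "u \<in> N - {t}" and v: "v \<in> B u"
  shows "torso_map N TE B t v = Inr (comp_del_node N TE t u)"
proof -
  have "v \<notin> B t" using tree_partition_bag_unique[of V E N TE B t u v] tp t u v by auto
  moreover have "(THE C. C \<in> comps_node N TE t \<and> (\<exists>h\<in>C. v \<in> B h)) = comp_del_node N TE t u"
  proof (rule the_equality)
    show "comp_del_node N TE t u \<in> comps_node N TE t \<and> (\<exists>h\<in>comp_del_node N TE t u. v \<in> B h)"
      using u v comp_del_node_self[OF u] unfolding comps_node_def by blast
  next
    fix C assume C: "C \<in> comps_node N TE t \<and> (\<exists>h\<in>C. v \<in> B h)"
    then obtain g h where g: "C = comp_del_node N TE t g" and h: "h \<in> C" "v \<in> B h"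
      unfolding comps_node_def by blast
    have "h \<in> N" using comp_del_node_subset[of N TE t g] g h(1) by blast
    then have "h = u" using tree_partition_bag_unique[OF tp _ _ h(2) v] u by blast
    then show "C = comp_del_node N TE t u" using comp_del_node_eq_if_mem h(1) g by metis
  qed
  ultimately show ?thesis by (simp add: torso_map_def)
qed

lemma torso_map_eq_Inr_iff:
  assumes tp: "tree_partition V E N TE B" and t: "t \<in> N" and h: "h \<in> N - {t}" and v: "v \<in> V"
  shows "torso_map N TE B t v = Inr (comp_del_node N TE t h) \<longleftrightarrow> v \<in> bag_union B (comp_del_node N TE t h)"
proof -
  let ?C = "comp_del_node N TE t h"
  obtain u where u: "u \<in> N" "v \<in> B u" using tree_partition_coverE[OF tp v] .
  have in_C: "v \<in> bag_union B ?C \<longleftrightarrow> u \<in> ?C"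
    using tree_partition_bag_unique[OF tp _ u(1) _ u(2)] comp_del_node_subset[of N TE t h] u
    unfolding bag_union_def by blast
  show ?thesis
  proof (cases "u = t")
    case True
    then show ?thesis using in_C u comp_del_node_subset[of N TE t h] by (auto simp: torso_map_Inl)
  next
    case False
    then have u': "u \<in> N - {t}" using u by simp
    have "comp_del_node N TE t u = ?C \<longleftrightarrow> u \<in> ?C"
      using comp_del_node_self[OF u'] comp_del_node_eq_if_mem[of u N TE t h] by auto
    then show ?thesis using torso_map_Inr[OF tp t u' u(2)] in_C by simp
  qed
qed

lemma deg_torso_E:
  "deg (torso_E E N TE B t) x =
     size (filter_mset (\<lambda>e. card (torso_map N TE B t ` e) = 2 \<and> x \<in> torso_map N TE B t ` e) E)"
  unfolding deg_def torso_E_def by (simp add: filter_filter_mset filter_mset_image_mset)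

lemma deg_torso_Inl:
  assumes g: "mgraph V E" and v: "v \<in> B t"
  shows "deg (torso_E E N TE B t) (Inl v) = deg E v"
proof -
  let ?M = "torso_map N TE B t"
  have "filter_mset (\<lambda>e. card (?M ` e) = 2 \<and> Inl v \<in> ?M ` e) E = filter_mset (\<lambda>e. v \<in> e) E"
  proof (rule filter_mset_cong0)
    fix e assume "e \<in># E"
    then obtain a b where e: "e = {a, b}" "a \<noteq> b" using mgraph_edgeE[OF g] by metis
    have Mv: "?M v = Inl v" using v by (rule torso_map_Inl)
    have "Inl v \<in> ?M ` e \<longleftrightarrow> v \<in> e"
    proof
      assume "Inl v \<in> ?M ` e"
      then obtain x where "x \<in> e" "?M x = Inl v" by auto
      then show "v \<in> e" by (simp add: torso_map_eq_Inl_iff)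
    qed (use Mv in \<open>metis image_eqI\<close>)
    moreover have "card (?M ` e) = 2" if "v \<in> e"
    proof -
      have ne: "?M x \<noteq> ?M v" if "x \<noteq> v" for x
        using that torso_map_eq_Inl_iff[of N TE B t x v] Mv by simp
      show ?thesis using \<open>v \<in> e\<close> e ne[of a] ne[of b] by (cases "a = v") auto
    qed
    ultimately show "(card (?M ` e) = 2 \<and> Inl v \<in> ?M ` e) = (v \<in> e)" by blast
  qed
  then show ?thesis unfolding deg_torso_E by (simp add: deg_def)
qed

text \<open>Every torso edge at the satellite of the component behind \<open>{t, h}\<close> comes from an edge of
  \<open>G\<close> crossing \<open>{t, h}\<close>.\<close>
lemma deg_torso_Inr_le_cross_size:
  assumes g: "mgraph V E" and tp: "tree_partition V E N TE B" and th: "{t, h} \<in> TE"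
  shows "deg (torso_E E N TE B t) (Inr (comp_del_node N TE t h)) \<le> cross_size E N TE B t h"
proof -
  let ?M = "torso_map N TE B t" and ?C = "comp_del_node N TE t h"
  have T: "stree N TE" using tp by (rule tree_partition_stree)
  have t: "t \<in> N" and h: "h \<in> N - {t}" using stree_edgeD[OF T th] by auto
  have C_side: "?C = comp_del_edge N TE {t, h} h"
    using comp_del_node_eq_comp_del_edge[OF T th] .
  have t_side: "comp_del_edge N TE {t, h} t = N - ?C"
    using comp_del_edge_other[of N TE h t] T th C_side by (simp add: insert_commute)
  have out_C: "x \<in> bag_union B (N - ?C)" if "x \<in> V" "x \<notin> bag_union B ?C" for x
    using that tree_partition_coverE[OF tp] unfolding bag_union_def by blast
  show ?thesis
    unfolding deg_torso_E cross_size_def cut_edges_def t_side C_side[symmetric]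
  proof (rule size_filter_mset_mono)
    fix e assume e: "e \<in># E" and P: "card (?M ` e) = 2 \<and> Inr ?C \<in> ?M ` e"
    obtain a b where ab: "e = {a, b}" "a \<in> V" "b \<in> V" using mgraph_edgeE[OF g e] by metis
    have "?M a \<noteq> ?M b" using P ab(1) by auto
    moreover have "?M a = Inr ?C \<or> ?M b = Inr ?C" using P ab(1) by auto
    ultimately have "(a \<in> bag_union B ?C) \<noteq> (b \<in> bag_union B ?C)"
      using torso_map_eq_Inr_iff[OF tp t h] ab by metis
    then show "e \<inter> bag_union B (N - ?C) \<noteq> {} \<and> e \<inter> bag_union B ?C \<noteq> {}"
      using out_C ab by blast
  qed
qed

lemma deg_torso_Inr_le:
  assumes g: "mgraph V E" and tp: "tree_partition V E N TE B" and t: "t \<in> N"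
    and adh: "\<forall>a b. {a, b} \<in> TE \<longrightarrow> cross_size E N TE B a b \<le> k"
    and C: "C \<in> comps_node N TE t"
  shows "deg (torso_E E N TE B t) (Inr C) \<le> k"
proof -
  obtain g0 where "g0 \<in> N - {t}" "C = comp_del_node N TE t g0"
    using C unfolding comps_node_def by blast
  then obtain h where "{t, h} \<in> TE" "C = comp_del_node N TE t h"
    using comp_del_node_neighbour[OF tree_partition_stree[OF tp] t] by metis
  then show ?thesis using deg_torso_Inr_le_cross_size[OF g tp] adh by (metis le_trans)
qed

lemma torso_high_degree_vertex:
  assumes g: "mgraph V E" and tp: "tree_partition V E N TE B" and t: "t \<in> N"
    and adh: "\<forall>a b. {a, b} \<in> TE \<longrightarrow> cross_size E N TE B a b \<le> k"
    and z: "z \<in> torso_V N TE B t" "deg (torso_E E N TE B t) z \<ge> k + 1"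
  obtains v where "z = Inl v" "v \<in> B t" "deg E v \<ge> k + 1"
proof (cases z)
  case (Inl v)
  then show ?thesis using that z deg_torso_Inl[OF g, where N=N and TE=TE] unfolding torso_V_def by auto
next
  case (Inr C)
  then show ?thesis using z deg_torso_Inr_le[OF g tp t adh, of C] unfolding torso_V_def by auto
qed

lemma finite_torso_V:
  assumes g: "mgraph V E" and tp: "tree_partition V E N TE B" and u: "u \<in> N"
  shows "finite (torso_V N TE B u)"
proof -
  have "finite (B u)"
    using g tree_partition_bag_subset[OF tp u] finite_subset unfolding mgraph_def by blast
  moreover have "finite N" using tree_partition_stree[OF tp] by (simp add: stree_def)
  ultimately show ?thesis unfolding torso_V_def comps_node_def by simp
qed

lemma k_tight_iff:
  assumes g: "mgraph V E"
  shows "k_tight k V E N TE B \<longleftrightarrow> tree_partition V E N TE B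
    \<and> (\<forall>a b. {a, b} \<in> TE \<longrightarrow> cross_size E N TE B a b \<le> k)
    \<and> (\<forall>u\<in>N. \<exists>v\<in>B u. deg E v \<ge> k + 1)"
proof (intro iffI conjI ballI)
  assume kt: "k_tight k V E N TE B"
  show tp: "tree_partition V E N TE B" and adh: "\<forall>a b. {a, b} \<in> TE \<longrightarrow> cross_size E N TE B a b \<le> k"
    using kt unfolding k_tight_def by auto
  fix u assume u: "u \<in> N"
  let ?S = "insert 0 (deg (torso_E E N TE B u) ` torso_V N TE B u)"
  have "k + 1 \<le> Max ?S" using kt u unfolding k_tight_def max_deg_def by auto
  moreover have "Max ?S \<in> ?S" using finite_torso_V[OF g tp u] by (intro Max_in) auto
  ultimately obtain z where "z \<in> torso_V N TE B u" "deg (torso_E E N TE B u) z \<ge> k + 1" by auto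
  then show "\<exists>v\<in>B u. deg E v \<ge> k + 1" using torso_high_degree_vertex[OF g tp u adh] by metis
next
  assume tight: "tree_partition V E N TE B
    \<and> (\<forall>a b. {a, b} \<in> TE \<longrightarrow> cross_size E N TE B a b \<le> k)
    \<and> (\<forall>u\<in>N. \<exists>v\<in>B u. deg E v \<ge> k + 1)"
  have "k + 1 \<le> max_deg (torso_V N TE B u) (torso_E E N TE B u)" if u: "u \<in> N" for u
  proof -
    obtain v where v: "v \<in> B u" "deg E v \<ge> k + 1" using tight u by blast
    have "deg (torso_E E N TE B u) (Inl v) \<le> max_deg (torso_V N TE B u) (torso_E E N TE B u)"
      unfolding max_deg_def using finite_torso_V[OF g _ u] tight v(1)
      by (intro Max_ge) (auto simp: torso_V_def)
    then show ?thesis using deg_torso_Inl[OF g, where B=B and t=u and N=N and TE=TE, OF v(1)] v(2) by simp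
  qed
  then show "k_tight k V E N TE B" using tight unfolding k_tight_def by blast
qed

lemma k_splittable_high_degree_sides:
  assumes g: "mgraph V E" and tight: "k_tight k V E N TE B" and t: "t \<in> N"
    and split: "k_splittable k E N TE B t"
  obtains X where "cut_edges (torso_E E N TE B t) X (torso_V N TE B t - X) \<le> k"
    "\<exists>v\<in>B t. Inl v \<in> X \<and> deg E v \<ge> k + 1" "\<exists>v\<in>B t. Inl v \<notin> X \<and> deg E v \<ge> k + 1"
proof -
  have tp: "tree_partition V E N TE B" and adh: "\<forall>a b. {a, b} \<in> TE \<longrightarrow> cross_size E N TE B a b \<le> k"
    using tight unfolding k_tight_def by auto
  obtain X x y where X: "X \<subseteq> torso_V N TE B t" "cut_edges (torso_E E N TE B t) X (torso_V N TE B t - X) \<le> k"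
    and x: "x \<in> X" "deg (torso_E E N TE B t) x \<ge> k + 1"
    and y: "y \<in> torso_V N TE B t - X" "deg (torso_E E N TE B t) y \<ge> k + 1"
    using split unfolding k_splittable_def Let_def by blast
  obtain v where "x = Inl v" "v \<in> B t" "deg E v \<ge> k + 1"
    using torso_high_degree_vertex[OF g tp t adh _ x(2)] x(1) X(1) by blast
  moreover obtain w where "y = Inl w" "w \<in> B t" "deg E w \<ge> k + 1"
    using torso_high_degree_vertex[OF g tp t adh _ y(2)] y(1) by blast
  ultimately show ?thesis using that X(2) x(1) y(1) by blast
qed

section \<open>Splitting a node of a tree-partition along a cut of its torso\<close>

text \<open>The node \<open>t\<close> is replaced by the edge between \<open>\<psi> t\<close> and a fresh node \<open>s\<close>: \<open>\<psi> t\<close> keeps the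
  vertices of \<open>B t\<close> whose torso vertex lies in \<open>X\<close> and the subtrees of \<open>T - t\<close> whose satellite
  lies in \<open>X\<close>, \<open>s\<close> takes the rest.\<close>
locale node_split =
  fixes V :: "'v set" and E :: "'v set multiset" and k :: nat
    and N :: "'n set" and TE :: "'n set set" and B :: "'n \<Rightarrow> 'v set"
    and t :: 'n and X :: "('v + 'n set) set"
    and \<psi> :: "'n \<Rightarrow> 'm" and s :: 'm
  assumes g: "mgraph V E"
    and tight: "k_tight k V E N TE B"
    and tN: "t \<in> N"
    and cut_X: "cut_edges (torso_E E N TE B t) X (torso_V N TE B t - X) \<le> k"
    and high_X: "\<exists>v\<in>B t. Inl v \<in> X \<and> deg E v \<ge> k + 1"
    and high_rest: "\<exists>v\<in>B t. Inl v \<notin> X \<and> deg E v \<ge> k + 1"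
    and inj: "inj_on \<psi> N"
    and s_fresh: "s \<notin> \<psi> ` N"
begin

definition X_comps where "X_comps = {u \<in> N - {t}. Inr (comp_del_node N TE t u) \<in> X}"
definition N' where "N' = insert s (\<psi> ` N)"
definition orig where "orig y = (if y = s then t else inv_into N \<psi> y)"
definition TE' where "TE' = (\<lambda>e. \<psi> ` e) ` {e \<in> TE. t \<notin> e}
   \<union> (\<lambda>h. {\<psi> t, \<psi> h}) ` {h. {t, h} \<in> TE \<and> h \<in> X_comps}
   \<union> (\<lambda>h. {s, \<psi> h}) ` {h. {t, h} \<in> TE \<and> h \<notin> X_comps}
   \<union> {{\<psi> t, s}}"
definition B_X where "B_X = {v \<in> B t. Inl v \<in> X}"
definition B' where "B' y = (if y = s then B t - B_X else if y = \<psi> t then B_X else B (orig y))"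

lemma tp: "tree_partition V E N TE B"
  and adh: "\<forall>a b. {a, b} \<in> TE \<longrightarrow> cross_size E N TE B a b \<le> k"
  and high: "\<forall>u\<in>N. \<exists>v\<in>B u. deg E v \<ge> k + 1"
  using tight by (simp_all add: k_tight_iff[OF g])

lemma T: "stree N TE" using tp by (rule tree_partition_stree)
lemma finite_N: "finite N" using T by (simp add: stree_def)
lemma TE_edgeD: "{p, q} \<in> TE \<Longrightarrow> p \<in> N \<and> q \<in> N \<and> p \<noteq> q" using stree_edgeD[OF T] .

lemma psi_ne_s: "x \<in> N \<Longrightarrow> \<psi> x \<noteq> s" using s_fresh by blast

lemma psi_eq_iff: "x \<in> N \<Longrightarrow> y \<in> N \<Longrightarrow> \<psi> x = \<psi> y \<longleftrightarrow> x = y"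
  using inj by (meson inj_onD)

lemma orig_psi: "x \<in> N \<Longrightarrow> orig (\<psi> x) = x"
  using psi_ne_s inj by (simp add: orig_def)

lemma orig_s: "orig s = t" by (simp add: orig_def)

lemma orig_in_N: "y \<in> N' \<Longrightarrow> orig y \<in> N"
  unfolding N'_def using orig_psi orig_s tN by auto

lemma orig_eq_iff:
  assumes "y \<in> N'" "y' \<in> N'"
  shows "orig y = orig y' \<longleftrightarrow> y = y' \<or> {y, y'} = {\<psi> t, s}"
  using assms psi_ne_s tN unfolding N'_def by (auto simp: orig_psi orig_s psi_eq_iff doubleton_eq_iff)

lemma TE'_cases:
  assumes "f \<in> TE'"
  obtains (copy) p q where "f = {\<psi> p, \<psi> q}" "{p, q} \<in> TE" "t \<noteq> p" "t \<noteq> q"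
    | (X_comp) h where "f = {\<psi> t, \<psi> h}" "{t, h} \<in> TE" "h \<in> X_comps"
    | (rest_comp) h where "f = {s, \<psi> h}" "{t, h} \<in> TE" "h \<notin> X_comps"
    | (new) "f = {\<psi> t, s}"
proof -
  have "(\<exists>e\<in>TE. t \<notin> e \<and> f = \<psi> ` e) \<or> (\<exists>h. {t, h} \<in> TE \<and> h \<in> X_comps \<and> f = {\<psi> t, \<psi> h})
     \<or> (\<exists>h. {t, h} \<in> TE \<and> h \<notin> X_comps \<and> f = {s, \<psi> h}) \<or> f = {\<psi> t, s}"
    using assms unfolding TE'_def by blast
  then show ?thesis
  proof (elim disjE exE bexE conjE)
    fix e assume e: "e \<in> TE" "t \<notin> e" "f = \<psi> ` e"
    have "card e = 2" using T e(1) by (simp add: stree_def)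
    then obtain p q where "e = {p, q}" by (meson card_2_iff)
    then show ?thesis using e copy by simp
  qed (use X_comp rest_comp new in blast)+
qed

lemma TE'_copy: "{p, q} \<in> TE \<Longrightarrow> t \<notin> {p, q} \<Longrightarrow> {\<psi> p, \<psi> q} \<in> TE'"
proof -
  assume "{p, q} \<in> TE" "t \<notin> {p, q}"
  then have "\<psi> ` {p, q} \<in> TE'" unfolding TE'_def by blast
  then show ?thesis by simp
qed
lemma TE'_X_comp: "{t, h} \<in> TE \<Longrightarrow> h \<in> X_comps \<Longrightarrow> {\<psi> t, \<psi> h} \<in> TE'"
  unfolding TE'_def by blast
lemma TE'_rest_comp: "{t, h} \<in> TE \<Longrightarrow> h \<notin> X_comps \<Longrightarrow> {s, \<psi> h} \<in> TE'"
  unfolding TE'_def by blast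
lemma TE'_new: "{\<psi> t, s} \<in> TE'"
  unfolding TE'_def by blast

lemma TE'_edge: assumes "f \<in> TE'" shows "card f = 2 \<and> f \<subseteq> N'"
  using assms
proof (cases rule: TE'_cases)
  case (copy p q)
  then show ?thesis using TE_edgeD[OF copy(2)] psi_eq_iff by (simp add: N'_def)
next
  case (X_comp h)
  then show ?thesis using TE_edgeD[OF X_comp(2)] psi_eq_iff tN by (simp add: N'_def)
next
  case (rest_comp h)
  then show ?thesis using TE_edgeD[OF rest_comp(2)] psi_ne_s by (fastforce simp: N'_def)
next
  case new
  then show ?thesis using psi_ne_s[OF tN] tN by (simp add: N'_def)
qed

text \<open>Every edge other than the new one is determined by its image under \<open>orig\<close>; this is what
  lets bridges of \<open>T\<close> become bridges of the split tree.\<close>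
definition lift_edge where
  "lift_edge e = (if t \<in> e then (if e - {t} \<subseteq> X_comps then \<psi> ` e else insert s (\<psi> ` (e - {t})))
     else \<psi> ` e)"

lemma orig_edge:
  assumes "f \<in> TE'" "f \<noteq> {\<psi> t, s}"
  shows "orig ` f \<in> TE \<and> f = lift_edge (orig ` f)"
  using assms(1)
proof (cases rule: TE'_cases)
  case (copy p q)
  then have "orig ` f = {p, q}" using TE_edgeD orig_psi by auto
  then show ?thesis using copy by (simp add: lift_edge_def)
next
  case (X_comp h)
  then have "h \<in> N" "t \<noteq> h" using TE_edgeD by auto
  then have "orig ` f = {t, h}" "{t, h} - {t} = {h}" using X_comp orig_psi tN by auto
  then show ?thesis using X_comp by (simp add: lift_edge_def)
next
  case (rest_comp h)
  then have "h \<in> N" "t \<noteq> h" using TE_edgeD by auto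
  then have "orig ` f = {t, h}" "{t, h} - {t} = {h}" using rest_comp orig_psi orig_s by auto
  then show ?thesis using rest_comp by (simp add: lift_edge_def)
qed (use assms(2) in simp)

lemma psi_t_reaches: "x \<in> N \<Longrightarrow> (\<psi> t, \<psi> x) \<in> {(x, y). {x, y} \<in> TE'}\<^sup>*"
proof -
  assume x: "x \<in> N"
  have "(t, x) \<in> {(x, y). {x, y} \<in> TE}\<^sup>*" using stree_connected[OF T tN x] .
  then show ?thesis
  proof (induction rule: rtrancl_induct)
    case (step y z)
    have e: "{y, z} \<in> TE" using step.hyps(2) by simp
    consider "z = t" | "y = t" "z \<in> X_comps" | "y = t" "z \<notin> X_comps" | "y \<noteq> t" "z \<noteq> t" by blast
    then show ?case
    proof cases
      case 2
      then show ?thesis using TE'_X_comp e by blast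
    next
      case 3
      then have "(\<psi> t, s) \<in> {(x, y). {x, y} \<in> TE'}" "(s, \<psi> z) \<in> {(x, y). {x, y} \<in> TE'}"
        using TE'_new TE'_rest_comp e by auto
      then show ?thesis by (meson r_into_rtrancl rtrancl_into_rtrancl)
    next
      case 4
      then have "(\<psi> y, \<psi> z) \<in> {(x, y). {x, y} \<in> TE'}" using TE'_copy[OF e] by simp
      then show ?thesis using step.IH by (rule rtrancl_into_rtrancl[rotated])
    qed simp
  qed simp
qed

lemma connected_split: "a \<in> N' \<Longrightarrow> b \<in> N' \<Longrightarrow> (a, b) \<in> {(x, y). {x, y} \<in> TE'}\<^sup>*"
proof -
  have "(\<psi> t, y) \<in> {(x, y). {x, y} \<in> TE'}\<^sup>*" if "y \<in> N'" for y
    using that psi_t_reaches TE'_new unfolding N'_def by blast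
  then show "a \<in> N' \<Longrightarrow> b \<in> N' \<Longrightarrow> ?thesis"
    using sym_rtrancl_doubleton_rel[of "\<psi> t" a TE' "\<lambda>_. True"] by (meson rtrancl_trans)
qed

lemma orig_rtrancl:
  assumes e': "e' \<in> TE'" "e' \<noteq> {\<psi> t, s}" and xy: "(x, y) \<in> (adj_without_edge TE' e')\<^sup>*"
  shows "(orig x, orig y) \<in> (adj_without_edge TE (orig ` e'))\<^sup>*"
  using xy
proof (induction rule: rtrancl_induct)
  case (step y z)
  have f: "{y, z} \<in> TE'" "{y, z} \<noteq> e'" using step.hyps(2) by (auto simp: adj_without_edge_def)
  have "(orig y, orig z) \<in> (adj_without_edge TE (orig ` e'))\<^sup>*"
  proof (cases "{y, z} = {\<psi> t, s}")
    case True
    then have "orig y = orig z" using orig_psi[OF tN] orig_s by (auto simp: doubleton_eq_iff)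
    then show ?thesis by simp
  next
    case False
    have "orig ` {y, z} \<noteq> orig ` e'"
      using orig_edge[OF f(1) False] orig_edge[OF e'] f(2) by metis
    then show ?thesis using orig_edge[OF f(1) False]
      by (simp add: adj_without_edge_def r_into_rtrancl)
  qed
  with step.IH show ?case by (rule rtrancl_trans)
qed simp

definition side_X where "side_X = insert (\<psi> t) (\<psi> ` X_comps)"
definition side_rest where "side_rest = insert s (\<psi> ` (N - {t} - X_comps))"

lemma X_comps_subset: "X_comps \<subseteq> N - {t}" unfolding X_comps_def by blast

lemma psi_in_side_X_iff: "u \<in> N \<Longrightarrow> \<psi> u \<in> side_X \<longleftrightarrow> u = t \<or> u \<in> X_comps"
  using X_comps_subset tN by (auto simp: side_X_def psi_eq_iff)

lemma s_notin_side_X: "s \<notin> side_X"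
  unfolding side_X_def using s_fresh X_comps_subset tN by blast

lemma side_rest_eq: "side_rest = N' - side_X"
proof -
  have "\<psi> u \<in> side_rest \<longleftrightarrow> \<psi> u \<notin> side_X" if "u \<in> N" for u
    using that psi_in_side_X_iff psi_ne_s by (auto simp: side_rest_def psi_eq_iff)
  then show ?thesis using s_notin_side_X unfolding N'_def by (auto simp: side_rest_def)
qed

lemma X_comps_edge: "{p, q} \<in> TE \<Longrightarrow> t \<notin> {p, q} \<Longrightarrow> p \<in> X_comps \<Longrightarrow> q \<in> X_comps"
  using comp_del_node_edge[of p q TE t N] TE_edgeD unfolding X_comps_def by auto

lemma side_X_closed:
  assumes xy: "(x, y) \<in> adj_without_edge TE' {\<psi> t, s}" and x: "x \<in> side_X"
  shows "y \<in> side_X"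
proof -
  have f: "{x, y} \<in> TE'" "{x, y} \<noteq> {\<psi> t, s}" using xy by (auto simp: adj_without_edge_def)
  from f(1) show ?thesis
  proof (cases rule: TE'_cases)
    case (copy p q)
    have pq: "p \<in> N" "q \<in> N" using TE_edgeD[OF copy(2)] by auto
    have "{q, p} \<in> TE" using copy(2) by (simp add: insert_commute)
    then show ?thesis
      using copy x X_comps_edge[OF copy(2)] X_comps_edge[of q p] psi_in_side_X_iff pq
      by (auto simp: doubleton_eq_iff)
  next
    case (X_comp h)
    then show ?thesis using TE_edgeD[OF X_comp(2)] psi_in_side_X_iff tN by (auto simp: doubleton_eq_iff)
  next
    case (rest_comp h)
    then have "\<psi> h \<notin> side_X" using TE_edgeD[OF rest_comp(2)] psi_in_side_X_iff by auto
    then show ?thesis using rest_comp x s_notin_side_X by (auto simp: doubleton_eq_iff)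
  qed (use f(2) in simp)
qed

lemma side_X_rtrancl: "(x, y) \<in> (adj_without_edge TE' {\<psi> t, s})\<^sup>* \<Longrightarrow> x \<in> side_X \<Longrightarrow> y \<in> side_X"
  by (induction rule: rtrancl_induct) (auto intro: side_X_closed)

text \<open>The new edge is a bridge because it is the only edge leaving \<open>side_X\<close>; every other edge
  is a bridge because its image under \<open>orig\<close> is one in \<open>T\<close>.\<close>
lemma bridge_split:
  assumes e: "{a, b} \<in> TE'"
  shows "(a, b) \<notin> (adj_without_edge TE' {a, b})\<^sup>*"
proof (cases "{a, b} = {\<psi> t, s}")
  case True
  have "(\<psi> t, s) \<notin> (adj_without_edge TE' {\<psi> t, s})\<^sup>*"
    using side_X_rtrancl s_notin_side_X by (auto simp: side_X_def)
  moreover from this have "(s, \<psi> t) \<notin> (adj_without_edge TE' {\<psi> t, s})\<^sup>*"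
    using adj_without_edge_rtrancl_sym by metis
  moreover have "(a, b) = (\<psi> t, s) \<or> (a, b) = (s, \<psi> t)" using True by (auto simp: doubleton_eq_iff)
  ultimately show ?thesis unfolding True by blast
next
  case False
  show ?thesis
  proof
    assume "(a, b) \<in> (adj_without_edge TE' {a, b})\<^sup>*"
    then have "(orig a, orig b) \<in> (adj_without_edge TE (orig ` {a, b}))\<^sup>*"
      using orig_rtrancl[OF e False] by simp
    then show False using stree_edge_is_bridge[OF T] orig_edge[OF e False] by simp
  qed
qed

lemma stree_split: "stree N' TE'"
  unfolding stree_def
proof (intro conjI ballI)
  show "finite N'" using finite_N by (simp add: N'_def)
  show "N' \<noteq> {}" by (simp add: N'_def)
  show "\<nexists>cs. tcycle TE' cs" using no_tcycle_if_bridges bridge_split by blast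
qed (use TE'_edge connected_split in auto)

lemma comp_del_edge_new:
  "comp_del_edge N' TE' {\<psi> t, s} (\<psi> t) = side_X" "comp_del_edge N' TE' {\<psi> t, s} s = side_rest"
proof -
  let ?A = "comp_del_edge N' TE' {\<psi> t, s} (\<psi> t)"
  have "?A \<subseteq> side_X" using side_X_rtrancl by (auto simp: comp_del_edge_eq side_X_def)
  moreover have "comp_del_edge N' TE' {\<psi> t, s} s \<subseteq> N' - side_X"
    using side_X_rtrancl s_notin_side_X
    by (auto simp: comp_del_edge_eq dest: adj_without_edge_rtrancl_sym)
  moreover have "side_X \<subseteq> N'" using X_comps_subset tN by (auto simp: side_X_def N'_def)
  moreover have "comp_del_edge N' TE' {\<psi> t, s} s = N' - ?A"
    using comp_del_edge_other[OF stree_split TE'_new] .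
  ultimately show "?A = side_X" "comp_del_edge N' TE' {\<psi> t, s} s = side_rest"
    unfolding side_rest_eq by blast+
qed

lemma B'_s: "B' s = B t - B_X" by (simp add: B'_def)
lemma B'_psi_t: "B' (\<psi> t) = B_X" using psi_ne_s[OF tN] by (simp add: B'_def)
lemma B'_psi: "u \<in> N - {t} \<Longrightarrow> B' (\<psi> u) = B u"
  using psi_ne_s psi_eq_iff[OF _ tN] orig_psi by (auto simp: B'_def)

lemma B_X_subset: "B_X \<subseteq> B t" by (auto simp: B_X_def)

lemma B'_subset_orig: "y \<in> N' \<Longrightarrow> B' y \<subseteq> B (orig y)"
  using B_X_subset orig_s orig_psi[OF tN] unfolding B'_def by auto

lemma bag_union_B'_orig:
  assumes S: "S \<subseteq> N"
  shows "bag_union B' {y \<in> N'. orig y \<in> S} = bag_union B S"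
proof
  show "bag_union B' {y \<in> N'. orig y \<in> S} \<subseteq> bag_union B S"
    using B'_subset_orig unfolding bag_union_def by blast
next
  show "bag_union B S \<subseteq> bag_union B' {y \<in> N'. orig y \<in> S}"
  proof
    fix v assume "v \<in> bag_union B S"
    then obtain u where u: "u \<in> S" "v \<in> B u" unfolding bag_union_def by blast
    then have uN: "u \<in> N" using S by blast
    show "v \<in> bag_union B' {y \<in> N'. orig y \<in> S}"
    proof (cases "u = t")
      case True
      then have "\<psi> t \<in> {y \<in> N'. orig y \<in> S}" "s \<in> {y \<in> N'. orig y \<in> S}"
        using u tN orig_psi[OF tN] orig_s by (auto simp: N'_def)
      then show ?thesis using True u(2) B'_s B'_psi_t unfolding bag_union_def by blast
    next
      case False
      then have "\<psi> u \<in> {y \<in> N'. orig y \<in> S}" using u uN orig_psi[OF uN] by (simp add: N'_def)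
      then show ?thesis using B'_psi[of u] uN False u(2) unfolding bag_union_def by blast
    qed
  qed
qed

lemma tree_partition_split: "tree_partition V E N' TE' B'"
  unfolding tree_partition_def
proof (intro conjI ballI impI stree_split)
  have "{y \<in> N'. orig y \<in> N} = N'" using orig_in_N by blast
  then have "bag_union B' N' = bag_union B N" using bag_union_B'_orig[of N] by simp
  then show "(\<Union>y\<in>N'. B' y) = V" using tp unfolding tree_partition_def bag_union_def by simp
next
  fix y y' assume y: "y \<in> N'" "y' \<in> N'" "y \<noteq> y'"
  show "B' y \<inter> B' y' = {}"
  proof (rule ccontr)
    assume "B' y \<inter> B' y' \<noteq> {}"
    then have "orig y = orig y'"
      using tree_partition_bag_unique[OF tp orig_in_N[OF y(1)] orig_in_N[OF y(2)]] B'_subset_orig y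
      by blast
    then have "{y, y'} = {\<psi> t, s}" using orig_eq_iff y by blast
    then show False using \<open>B' y \<inter> B' y' \<noteq> {}\<close> B'_s B'_psi_t by (auto simp: doubleton_eq_iff)
  qed
qed

lemma comp_del_edge_split_eq:
  assumes e: "{a, b} \<in> TE'" and ne: "{a, b} \<noteq> {\<psi> t, s}"
  shows "comp_del_edge N' TE' {a, b} a = {y \<in> N'. orig y \<in> comp_del_edge N TE {orig a, orig b} (orig a)}"
proof -
  have orig_side: "orig y \<in> comp_del_edge N TE {orig a, orig b} (orig c)"
    if "y \<in> comp_del_edge N' TE' {a, b} c" for c y
    using that orig_rtrancl[OF e ne] orig_in_N by (auto simp: comp_del_edge_eq)
  have e_orig: "{orig a, orig b} \<in> TE" using orig_edge[OF e ne] by simp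
  show ?thesis
  proof (intro equalityI subsetI CollectI conjI)
    fix y assume y: "y \<in> comp_del_edge N' TE' {a, b} a"
    then show "y \<in> N'" by (simp add: comp_del_edge_eq)
    show "orig y \<in> comp_del_edge N TE {orig a, orig b} (orig a)" using orig_side[OF y] .
  next
    fix y assume y: "y \<in> {y \<in> N'. orig y \<in> comp_del_edge N TE {orig a, orig b} (orig a)}"
    have "y \<notin> comp_del_edge N' TE' {a, b} b"
      using y orig_side[of y b] comp_del_edge_disjoint[OF T e_orig] by blast
    then show "y \<in> comp_del_edge N' TE' {a, b} a"
      using comp_del_edge_cover[OF stree_split e] y by blast
  qed
qed

lemma cross_size_copy:
  assumes e: "{a, b} \<in> TE'" and ne: "{a, b} \<noteq> {\<psi> t, s}"
  shows "cross_size E N' TE' B' a b = cross_size E N TE B (orig a) (orig b)"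
proof -
  have "{b, a} \<in> TE'" "{b, a} \<noteq> {\<psi> t, s}" using e ne by (simp_all add: insert_commute)
  from comp_del_edge_split_eq[OF this] comp_del_edge_split_eq[OF e ne] show ?thesis
    unfolding cross_size_def using bag_union_B'_orig[OF comp_del_edge_subset]
    by (simp add: insert_commute)
qed

lemma torso_map_side_X:
  assumes "v \<in> bag_union B' side_X"
  shows "v \<in> V \<and> torso_map N TE B t v \<in> X"
proof -
  obtain y where y: "y \<in> side_X" "v \<in> B' y" using assms unfolding bag_union_def by blast
  then consider "y = \<psi> t" | u where "u \<in> X_comps" "y = \<psi> u" unfolding side_X_def by blast
  then show ?thesis
  proof cases
    case 1
    then have "v \<in> B t" "Inl v \<in> X" using y B'_psi_t by (auto simp: B_X_def)
    then show ?thesis using tree_partition_bag_subset[OF tp tN] torso_map_Inl by fastforce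
  next
    case (2 u)
    then have u: "u \<in> N - {t}" "v \<in> B u" using y X_comps_subset B'_psi by auto
    then show ?thesis using \<open>u \<in> X_comps\<close> torso_map_Inr[OF tp tN u] tree_partition_bag_subset[OF tp]
      unfolding X_comps_def by auto
  qed
qed

lemma torso_map_side_rest:
  assumes "v \<in> bag_union B' side_rest"
  shows "v \<in> V \<and> torso_map N TE B t v \<in> torso_V N TE B t - X"
proof -
  obtain y where y: "y \<in> side_rest" "v \<in> B' y" using assms unfolding bag_union_def by blast
  then consider "y = s" | u where "u \<in> N - {t} - X_comps" "y = \<psi> u" unfolding side_rest_def by blast
  then show ?thesis
  proof cases
    case 1
    then have "v \<in> B t" "Inl v \<notin> X" using y B'_s by (auto simp: B_X_def)
    then show ?thesis using tree_partition_bag_subset[OF tp tN] torso_map_Inl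
      by (fastforce simp: torso_V_def)
  next
    case (2 u)
    then have u: "u \<in> N - {t}" "v \<in> B u" using y B'_psi by auto
    then show ?thesis using 2 torso_map_Inr[OF tp tN u] tree_partition_bag_subset[OF tp]
      unfolding X_comps_def torso_V_def comps_node_def by auto
  qed
qed

text \<open>An edge of \<open>G\<close> crossing the new tree edge joins the two sides of the cut \<open>X\<close> in the torso.\<close>
lemma cross_size_new: "cross_size E N' TE' B' (\<psi> t) s \<le> k"
proof -
  let ?M = "torso_map N TE B t" and ?Z = "torso_V N TE B t"
  have "cross_size E N' TE' B' (\<psi> t) s
     \<le> size (filter_mset (\<lambda>e. card (?M ` e) = 2 \<and> ?M ` e \<inter> X \<noteq> {} \<and> ?M ` e \<inter> (?Z - X) \<noteq> {}) E)"
    unfolding cross_size_def comp_del_edge_new cut_edges_def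
  proof (rule size_filter_mset_mono)
    fix e assume e: "e \<in># E" and "e \<inter> bag_union B' side_X \<noteq> {} \<and> e \<inter> bag_union B' side_rest \<noteq> {}"
    then obtain a b where ab: "a \<in> e" "a \<in> bag_union B' side_X" "b \<in> e" "b \<in> bag_union B' side_rest"
      by blast
    have "?M a \<in> X" "?M b \<in> ?Z - X"
      using torso_map_side_X[OF ab(2)] torso_map_side_rest[OF ab(4)] by auto
    moreover from this have "?M a \<noteq> ?M b" by auto
    moreover obtain p q where "e = {p, q}" using mgraph_edgeE[OF g e] by metis
    ultimately show "card (?M ` e) = 2 \<and> ?M ` e \<inter> X \<noteq> {} \<and> ?M ` e \<inter> (?Z - X) \<noteq> {}"
      using ab(1,3) by auto
  qed
  also have "\<dots> = cut_edges (torso_E E N TE B t) X (?Z - X)"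
    unfolding cut_edges_def torso_E_def
    by (simp add: filter_filter_mset filter_mset_image_mset conj_assoc)
  finally show ?thesis using cut_X by simp
qed

lemma adhesion_split: "{a, b} \<in> TE' \<Longrightarrow> cross_size E N' TE' B' a b \<le> k"
proof (cases "{a, b} = {\<psi> t, s}")
  case True
  have "cross_size E N' TE' B' a b = cross_size E N' TE' B' (\<psi> t) s"
    using True unfolding cross_size_def cut_edges_def
    by (auto simp: doubleton_eq_iff insert_commute conj_commute)
  then show ?thesis using cross_size_new by simp
next
  case False
  assume e: "{a, b} \<in> TE'"
  then show ?thesis using cross_size_copy[OF e False] adh orig_edge[OF e False] by simp
qed

lemma high_degree_split: "\<forall>y\<in>N'. \<exists>v\<in>B' y. deg E v \<ge> k + 1"
proof
  fix y assume "y \<in> N'"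
  then consider "y = s" | "y = \<psi> t" | u where "u \<in> N - {t}" "y = \<psi> u" unfolding N'_def by blast
  then show "\<exists>v\<in>B' y. deg E v \<ge> k + 1"
  proof cases
    case 1 then show ?thesis using high_rest B'_s by (auto simp: B_X_def)
  next
    case 2 then show ?thesis using high_X B'_psi_t by (auto simp: B_X_def)
  next
    case (3 u) then show ?thesis using high B'_psi by auto
  qed
qed

lemma k_tight_split: "k_tight k V E N' TE' B'"
  using tree_partition_split adhesion_split high_degree_split by (simp add: k_tight_iff[OF g])

lemma weight_split: "weight k E N' B' = weight k E N B - 1"
proof -
  let ?f = "\<lambda>y. int (s_count k E B' y) - 1" and ?g = "\<lambda>u. int (s_count k E B u) - 1"
  have "finite (B t)"
    using g tree_partition_bag_subset[OF tp tN] finite_subset unfolding mgraph_def by blast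
  then have "s_count k E B' (\<psi> t) + s_count k E B' s = s_count k E B t"
    unfolding s_count_def B'_psi_t B'_s B_X_def
    by (subst card_Un_disjoint[symmetric]) (auto intro: arg_cong[where f = card])
  moreover have "sum (?f \<circ> \<psi>) (N - {t}) = sum ?g (N - {t})"
    using B'_psi by (simp add: s_count_def)
  moreover have "weight k E N' B' = ?f s + (?f (\<psi> t) + sum (?f \<circ> \<psi>) (N - {t}))"
    unfolding weight_def N'_def
    using finite_N s_fresh inj tN by (simp add: sum.reindex sum.remove)
  moreover have "weight k E N B = ?g t + sum ?g (N - {t})"
    unfolding weight_def using finite_N tN by (rule sum.remove)
  ultimately show ?thesis by simp
qed

end

theorem mainTheorem7:
  fixes V :: "'v set" and E :: "'v set multiset" and k :: nat
    and N :: "'n set" and TE :: "'n set set" and B :: "'n \<Rightarrow> 'v set"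
  assumes "mgraph V E"
    and "k_tight k V E N TE B"
    and "\<exists>t\<in>N. k_splittable k E N TE B t"
  shows "\<exists>(N' :: nat set) TE' B'. k_tight k V E N' TE' B' \<and> weight k E N' B' < weight k E N B"
proof -
  obtain t where t: "t \<in> N" "k_splittable k E N TE B t" using assms(3) by blast
  then obtain X where "cut_edges (torso_E E N TE B t) X (torso_V N TE B t - X) \<le> k"
    "\<exists>v\<in>B t. Inl v \<in> X \<and> deg E v \<ge> k + 1" "\<exists>v\<in>B t. Inl v \<notin> X \<and> deg E v \<ge> k + 1"
    using k_splittable_high_degree_sides[OF assms(1,2)] by metis
  moreover have "finite N"
    using assms(2) unfolding k_tight_def tree_partition_def stree_def by blast
  then obtain \<psi> :: "'n \<Rightarrow> nat" and s where "inj_on \<psi> N" "s \<notin> \<psi> ` N"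
    using finite_imp_inj_to_nat_seg ex_new_if_finite[OF infinite_UNIV_nat] by (metis finite_imageI)
  ultimately interpret node_split V E k N TE B t X \<psi> s
    using assms(1,2) t(1) by unfold_locales
  show ?thesis
    using k_tight_split weight_split by (intro exI[of _ N'] exI[of _ TE'] exI[of _ B']) simp
qed

end
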